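(* Let $T$ be a linear operator bounded on $L^2(\mathbb R^n)$ with kernel $K$ (locally integrable on $\mathbb R^{2n}$ off the diagonal) such that $Tg(x)=\int K(x,y)g(y)\,dy$ for $x$ outside the support of a compactly supported $g\in L^2$, and such that: (a) for some $\mu>0$, $|K(x,y)|\le C\min\{|x-y|^{-n},|x-y|^{-n-\mu}\}$ for $x\neq y$; (b) for some $\delta>0$ and all $0<r<1$, $j\in\mathbb N$, $z\in\mathbb R^n$ and $|y-z|<r$, $$\int_{A_j(z,r)}\big(|K(x,y)-K(x,z)|+|K(y,x)-K(z,x)|\big)dx\lesssim 2^{-j\delta},$$ where $A_j(z,r)=\{x:2^jr\le|x-z|<2^{j+1}r\}$. Then for every compactly supported $g\in L^2(\mathbb R^n)$ with $\int g=0$ and every multi-index $\alpha$ with $|\alpha|<\min\{\mu,\delta\}$, the function $x\mapsto x^\alpha Tg(x)$ belongs to $L^1(\mathbb R^n)$. *)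

theory Defs
  imports "HOL-Analysis.Analysis"
begin

definition L2 :: "(real^'n \<Rightarrow> complex) set" where
  "L2 = {f. f \<in> borel_measurable lebesgue \<and> integrable lebesgue (\<lambda>x. (norm (f x))^2)}"

definition L2_norm_sq :: "(real^'n \<Rightarrow> complex) \<Rightarrow> real" where
  "L2_norm_sq f = (LINT x|lebesgue. (norm (f x))^2)"

definition supp :: "(real^'n \<Rightarrow> complex) \<Rightarrow> (real^'n) set" where
  "supp f = closure {x. f x \<noteq> 0}"

definition mi_order :: "('n::finite \<Rightarrow> nat) \<Rightarrow> nat" where
  "mi_order \<alpha> = (\<Sum>i\<in>UNIV. \<alpha> i)"

definition monomial :: "real^'n \<Rightarrow> ('n \<Rightarrow> nat) \<Rightarrow> real" where
  "monomial x \<alpha> = (\<Prod>i\<in>UNIV. (x $ i) ^ (\<alpha> i))"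

definition annulus :: "nat \<Rightarrow> real^'n \<Rightarrow> real \<Rightarrow> (real^'n) set" where
  "annulus j z r = {x. 2^j * r \<le> dist x z \<and> dist x z < 2^(j+1) * r}"

end

theory Submission
  imports Defs
begin

(*
  Away from the support of g (contained in the ball of radius R) the size condition gives
  |K(x,y)| \<le> C |x - y|^(-n-\<mu>) \<le> C 2^(n+\<mu>) |x|^(-n-\<mu>) for |x| \<ge> 2R, hence
  |Tg(x)| \<le> C 2^(n+\<mu>) \<parallel>g\<parallel>_1 |x|^(-n-\<mu>). Since |x^\<alpha>| \<le> |x|^|\<alpha>| and |\<alpha>| < \<mu>, the product
  x^\<alpha> Tg(x) is integrable at infinity, and on the ball of radius 2R it is integrable because
  Tg \<in> L^2.
*)

lemma ex_dyadic_shell: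
  fixes r \<rho> :: real
  assumes "0 < \<rho>" "\<rho> \<le> r"
  shows "\<exists>k. 2 ^ k * \<rho> \<le> r \<and> r < 2 ^ Suc k * \<rho>"
proof -
  define t where "t = r / \<rho>"
  have "t \<ge> 1" using assms by (simp add: t_def)
  define k where "k = nat \<lfloor>log 2 t\<rfloor>"
  have "real_of_int \<lfloor>log 2 t\<rfloor> = real k"
    using \<open>t \<ge> 1\<close> by (simp add: k_def)
  then have "2 powr real k \<le> t \<and> t < 2 powr (real k + 1)"
    using floor_log_eq_powr_iff[of t 2 "\<lfloor>log 2 t\<rfloor>"] \<open>t \<ge> 1\<close> by simp
  then have "2 ^ k \<le> t \<and> t < 2 ^ Suc k"
    by (simp add: powr_realpow[symmetric] powr_add)
  then show ?thesis
    using assms by (auto simp: t_def field_simps)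
qed

lemma borel_measurable_lebesgueI:
  "f \<in> borel_measurable borel \<Longrightarrow> f \<in> borel_measurable lebesgue"
  by (rule measurable_completion) (simp add: measurable_cong_sets[OF sets_lborel refl])

definition dyadic_shell :: "real \<Rightarrow> nat \<Rightarrow> 'a::real_normed_vector set" where
  "dyadic_shell \<rho> k = {x. 2 ^ k * \<rho> \<le> norm x \<and> norm x < 2 ^ Suc k * \<rho>}"

lemma dyadic_shell_borel [measurable]: "dyadic_shell \<rho> k \<in> sets borel"
  unfolding dyadic_shell_def by measurable

lemma indicator_norm_powr_le_suminf_dyadic_shell:
  fixes x :: "'a::real_normed_vector"
  assumes \<rho>: "\<rho> > 0" and s: "s \<ge> 0"
  shows "ennreal (indicator {x. \<rho> \<le> norm x} x * norm x powr (- s))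
    \<le> (\<Sum>k. ennreal ((2 ^ k * \<rho>) powr (- s)) * indicator (dyadic_shell \<rho> k) x)"
proof (cases "\<rho> \<le> norm x")
  case True
  have term_le_suminf: "f k \<le> (\<Sum>j. f j)" for f :: "nat \<Rightarrow> ennreal" and k
    using sum_le_suminf[of f "{k}"] by simp
  obtain k where k: "2 ^ k * \<rho> \<le> norm x" "norm x < 2 ^ Suc k * \<rho>"
    using ex_dyadic_shell[OF \<rho> True] by blast
  have "norm x powr (- s) \<le> (2 ^ k * \<rho>) powr (- s)"
    using k \<rho> s by (intro powr_mono2') auto
  then have "ennreal (indicator {x. \<rho> \<le> norm x} x * norm x powr (- s))
      \<le> ennreal ((2 ^ k * \<rho>) powr (- s)) * indicator (dyadic_shell \<rho> k) x"
    using True k by (simp add: dyadic_shell_def ennreal_leI)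
  also have "\<dots> \<le> (\<Sum>j. ennreal ((2 ^ j * \<rho>) powr (- s)) * indicator (dyadic_shell \<rho> j) x)"
    by (rule term_le_suminf)
  finally show ?thesis .
qed simp

lemma emeasure_le_ball_volume:
  fixes A :: "'a::euclidean_space set"
  assumes "A \<subseteq> ball 0 r" "r \<ge> 0"
  shows "emeasure lebesgue A \<le> ennreal (r ^ DIM('a) * measure lebesgue (ball (0::'a) 1))"
proof -
  have "emeasure lebesgue A \<le> emeasure lebesgue (ball (0::'a) r)"
    using assms(1) by (rule emeasure_mono) simp
  also have "\<dots> = ennreal (r ^ DIM('a)) * emeasure lebesgue (ball (0::'a) 1)"
    using assms(2) by (rule emeasure_lebesgue_ball_conv_unit_ball)
  also have "emeasure lebesgue (ball (0::'a) 1) = ennreal (measure lebesgue (ball (0::'a) 1))"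
    by (intro emeasure_eq_measure2) simp
  finally show ?thesis
    using assms(2) by (simp add: ennreal_mult)
qed

lemma dyadic_shell_powr_product:
  fixes \<rho> s V :: real and d k :: nat
  assumes "\<rho> > 0"
  shows "(2 ^ k * \<rho>) powr (- s) * ((2 ^ Suc k * \<rho>) ^ d * V)
    = 2 powr d * \<rho> powr (d - s) * V * (2 powr (d - s)) ^ k"
proof -
  have "(2 ^ k * \<rho>) powr (- s) = 2 powr (- s * k) * \<rho> powr (- s)"
    using assms by (simp add: powr_mult powr_realpow[symmetric] powr_powr mult.commute)
  moreover have "(2 ^ Suc k * \<rho>) ^ d = 2 powr d * 2 powr (d * k) * \<rho> powr d"
    using assms by (simp add: powr_realpow[symmetric] powr_mult powr_powr powr_add algebra_simps)
  moreover have "(2 powr (d - s)) ^ k = 2 powr (d * k) * 2 powr (- s * k)"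
    by (simp add: powr_realpow[symmetric] powr_powr powr_add[symmetric] algebra_simps)
  moreover have "\<rho> powr (d - s) = \<rho> powr d * \<rho> powr (- s)"
    by (simp add: powr_add[symmetric])
  ultimately show ?thesis by simp
qed

lemma integrable_norm_powr_outside_ball:
  fixes \<rho> s :: real
  assumes \<rho>: "\<rho> > 0" and s: "s > DIM('a)"
  shows "integrable lebesgue (\<lambda>x::'a::euclidean_space. indicator {x. \<rho> \<le> norm x} x * norm x powr (- s))"
proof (rule integrableI_nonneg)
  define d where "d = DIM('a)"
  define V where "V = measure lebesgue (ball (0::'a) 1)"
  define q where "q = (2::real) powr (d - s)"
  have "q < 1" using s powr_less_mono[of "d - s" 0 2] by (simp add: q_def d_def)
  have "V \<ge> 0" by (simp add: V_def)
  have [measurable]: "dyadic_shell \<rho> k \<in> sets lebesgue" for k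
    by simp
  show "(\<lambda>x. indicator {x. \<rho> \<le> norm x} x * norm x powr (- s)) \<in> borel_measurable lebesgue"
    by (intro borel_measurable_lebesgueI) measurable
  show "AE x in lebesgue. 0 \<le> indicator {x. \<rho> \<le> norm x} x * norm x powr (- s)"
    by (simp add: indicator_def)
  have shell_term_le: "ennreal ((2 ^ k * \<rho>) powr (- s)) * emeasure lebesgue (dyadic_shell \<rho> k :: 'a set)
      \<le> ennreal (2 powr d * \<rho> powr (d - s) * V * q ^ k)" for k
  proof -
    have "emeasure lebesgue (dyadic_shell \<rho> k :: 'a set) \<le> ennreal ((2 ^ Suc k * \<rho>) ^ d * V)"
      unfolding d_def V_def using \<rho> by (intro emeasure_le_ball_volume) (auto simp: dyadic_shell_def)
    then have "ennreal ((2 ^ k * \<rho>) powr (- s)) * emeasure lebesgue (dyadic_shell \<rho> k :: 'a set)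
        \<le> ennreal ((2 ^ k * \<rho>) powr (- s) * ((2 ^ Suc k * \<rho>) ^ d * V))"
      using \<rho> \<open>V \<ge> 0\<close> by (simp add: ennreal_mult mult_left_mono)
    then show ?thesis
      by (simp only: dyadic_shell_powr_product[OF \<rho>] q_def)
  qed
  have "(\<integral>\<^sup>+x. ennreal (indicator {x. \<rho> \<le> norm x} x * norm x powr (- s)) \<partial>(lebesgue :: 'a measure))
      \<le> (\<integral>\<^sup>+x. (\<Sum>k. ennreal ((2 ^ k * \<rho>) powr (- s)) * indicator (dyadic_shell \<rho> k) x)
          \<partial>(lebesgue :: 'a measure))"
    by (rule nn_integral_mono, rule indicator_norm_powr_le_suminf_dyadic_shell) (use \<rho> s in auto)
  also have "\<dots> = (\<Sum>k. ennreal ((2 ^ k * \<rho>) powr (- s)) * emeasure lebesgue (dyadic_shell \<rho> k :: 'a set))"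
    by (simp add: nn_integral_suminf nn_integral_cmult_indicator)
  also have "\<dots> \<le> (\<Sum>k. ennreal (2 powr d * \<rho> powr (d - s) * V * q ^ k))"
    by (rule suminf_le[OF shell_term_le]) simp_all
  also have "\<dots> = ennreal (\<Sum>k. 2 powr d * \<rho> powr (d - s) * V * q ^ k)"
    using \<open>q < 1\<close> \<open>V \<ge> 0\<close>
    by (intro suminf_ennreal2) (auto simp: q_def intro!: summable_mult summable_geometric)
  also have "\<dots> < \<infinity>" by simp
  finally show "(\<integral>\<^sup>+x. ennreal (indicator {x. \<rho> \<le> norm x} x * norm x powr (- s)) \<partial>(lebesgue :: 'a measure)) < \<infinity>" .
qed

lemma integrable_indicator_norm_if_square_integrable:
  fixes f :: "'a \<Rightarrow> 'b::real_normed_vector"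
  assumes f: "f \<in> borel_measurable M" and f2: "integrable M (\<lambda>x. norm (f x) ^ 2)"
    and A: "A \<in> sets M" "emeasure M A < \<infinity>"
  shows "integrable M (\<lambda>x. indicator A x * norm (f x))"
proof (rule Bochner_Integration.integrable_bound)
  show "integrable M (\<lambda>x. indicator A x + norm (f x) ^ 2)"
    using A f2 by (intro Bochner_Integration.integrable_add integrable_real_indicator) auto
  show "(\<lambda>x. indicator A x * norm (f x)) \<in> borel_measurable M"
    using f A by measurable
  have "t \<le> 1 + t ^ 2" for t :: real
  proof (cases "t \<le> 1")
    case False
    then have "t \<le> t ^ 2" by (simp add: power2_eq_square)
    then show ?thesis by simp
  qed (use zero_le_power2[of t] in linarith)
  then show "AE x in M. norm (indicator A x * norm (f x)) \<le> norm (indicator A x + norm (f x) ^ 2)"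
    by (auto simp: indicator_def)
qed

lemma integrable_if_square_integrable_vanishing_outside:
  fixes f :: "'a \<Rightarrow> 'b::{banach, second_countable_topology}"
  assumes f: "f \<in> borel_measurable M" and f2: "integrable M (\<lambda>x. norm (f x) ^ 2)"
    and A: "A \<in> sets M" "emeasure M A < \<infinity>" and vanish: "\<And>x. x \<notin> A \<Longrightarrow> f x = 0"
  shows "integrable M f"
proof (rule Bochner_Integration.integrable_bound)
  show "integrable M (\<lambda>x. indicator A x * norm (f x))"
    using integrable_indicator_norm_if_square_integrable[OF f f2 A] .
  show "AE x in M. norm (f x) \<le> norm (indicator A x * norm (f x))"
    using vanish by (auto simp: indicator_def)
qed (rule f)

lemma norm_integral_kernel_far_le:
  fixes K :: "'a::real_normed_vector \<Rightarrow> 'a \<Rightarrow> 'b::{real_normed_div_algebra, banach, second_countable_topology}"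
  assumes K: "\<And>y. y \<noteq> x \<Longrightarrow> norm (K x y) \<le> C * dist x y powr (- p)"
    and C: "C \<ge> 0" and p: "p \<ge> 0"
    and g: "integrable M g" and supp: "\<And>y. g y \<noteq> 0 \<Longrightarrow> norm y \<le> R"
    and R: "R > 0" and x: "2 * R \<le> norm x"
  shows "norm (LINT y|M. K x y * g y) \<le> C * 2 powr p * (LINT y|M. norm (g y)) * norm x powr (- p)"
proof -
  define B where "B = C * 2 powr p * norm x powr (- p)"
  have "B \<ge> 0" using C by (simp add: B_def)
  have pointwise: "norm (K x y * g y) \<le> B * norm (g y)" for y
  proof (cases "g y = 0")
    case False
    then have "norm y \<le> R" by (rule supp)
    then have far: "norm x / 2 \<le> dist x y"
      using x norm_triangle_ineq2[of x y] by (simp add: dist_norm)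
    then have "y \<noteq> x" using x R by auto
    have "norm (K x y) \<le> C * dist x y powr (- p)" using K[OF \<open>y \<noteq> x\<close>] .
    also have "\<dots> \<le> C * (norm x / 2) powr (- p)"
      using far x R C p by (intro mult_left_mono powr_mono2') auto
    also have "\<dots> = B" by (simp add: B_def powr_divide powr_minus_divide)
    finally show ?thesis by (simp add: norm_mult mult_right_mono)
  qed simp
  show ?thesis
  proof (cases "integrable M (\<lambda>y. K x y * g y)")
    case True
    have "norm (LINT y|M. K x y * g y) \<le> (LINT y|M. norm (K x y * g y))"
      by (rule integral_norm_bound)
    also have "\<dots> \<le> (LINT y|M. B * norm (g y))"
      using True g pointwise by (intro integral_mono) auto
    finally show ?thesis by (simp add: B_def mult_ac)
  next
    case False
    then show ?thesis using C p by (simp add: not_integrable_integral_eq)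
  qed
qed

lemma integrable_norm_power_mult_if_decay:
  fixes f :: "'a::euclidean_space \<Rightarrow> 'b::real_normed_vector"
  assumes f: "f \<in> borel_measurable lebesgue" and f2: "integrable lebesgue (\<lambda>x. norm (f x) ^ 2)"
    and \<rho>: "\<rho> > 0"
    and decay: "AE x in lebesgue. \<rho> \<le> norm x \<longrightarrow> norm (f x) \<le> B * norm x powr (- p)"
    and p: "real k + DIM('a) < p"
  shows "integrable lebesgue (\<lambda>x. norm x ^ k * norm (f x))"
proof (rule Bochner_Integration.integrable_bound)
  define near where "near x = \<rho> ^ k * (indicator (cball 0 \<rho>) x * norm (f x))" for x :: 'a
  define far where "far x = \<bar>B\<bar> * (indicator {x. \<rho> \<le> norm x} x * norm x powr (- (p - k)))" for x :: 'a
  have "cball (0::'a) \<rho> \<in> sets lebesgue" "emeasure lebesgue (cball (0::'a) \<rho>) < \<infinity>"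
    using lmeasurable_cball[of 0 \<rho>] by (auto simp: fmeasurable_def)
  then show "integrable lebesgue (\<lambda>x. near x + far x)"
    unfolding near_def far_def using \<rho> p
    by (intro Bochner_Integration.integrable_add integrable_mult_right
        integrable_indicator_norm_if_square_integrable[OF f f2] integrable_norm_powr_outside_ball) auto
  have "(\<lambda>x::'a. norm x ^ k) \<in> borel_measurable lebesgue"
    by (intro borel_measurable_lebesgueI) measurable
  then show "(\<lambda>x. norm x ^ k * norm (f x)) \<in> borel_measurable lebesgue"
    using f by (intro borel_measurable_times borel_measurable_norm) auto
  show "AE x in lebesgue. norm (norm x ^ k * norm (f x)) \<le> norm (near x + far x)"
    using decay
  proof (rule AE_mp[OF _ AE_I2], intro impI)
    fix x :: 'a
    assume decay_x: "\<rho> \<le> norm x \<longrightarrow> norm (f x) \<le> B * norm x powr (- p)"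
    have "near x \<ge> 0" "far x \<ge> 0"
      using \<rho> by (simp_all add: near_def far_def)
    have "norm x ^ k * norm (f x) \<le> near x + far x"
    proof (cases "norm x \<le> \<rho>")
      case True
      then have "norm x ^ k * norm (f x) \<le> near x"
        by (simp add: near_def mult_right_mono power_mono)
      then show ?thesis using \<open>far x \<ge> 0\<close> by simp
    next
      case False
      then have "norm x > 0" using \<rho> by linarith
      have "norm x ^ k * norm (f x) \<le> norm x ^ k * (\<bar>B\<bar> * norm x powr (- p))"
        using False decay_x mult_right_mono[OF abs_ge_self, of "norm x powr (- p)" B]
        by (intro mult_left_mono) auto
      also have "\<dots> = far x"
        using False \<open>norm x > 0\<close> by (simp add: far_def powr_realpow powr_diff powr_minus_divide)
      finally show ?thesis using \<open>near x \<ge> 0\<close> by simp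
    qed
    then show "norm (norm x ^ k * norm (f x)) \<le> norm (near x + far x)"
      using \<open>near x \<ge> 0\<close> \<open>far x \<ge> 0\<close> by simp
  qed
qed

lemma abs_monomial_le: "\<bar>monomial x \<alpha>\<bar> \<le> norm x ^ mi_order \<alpha>"
proof -
  have "\<bar>monomial x \<alpha>\<bar> = (\<Prod>i\<in>UNIV. \<bar>x $ i\<bar> ^ \<alpha> i)"
    by (simp add: monomial_def abs_prod power_abs)
  also have "\<dots> \<le> (\<Prod>i\<in>UNIV. norm x ^ \<alpha> i)"
    by (intro prod_mono conjI power_mono component_le_norm_cart) auto
  also have "\<dots> = norm x ^ mi_order \<alpha>"
    by (simp add: mi_order_def power_sum)
  finally show ?thesis .
qed

lemma borel_measurable_monomial: "(\<lambda>x. monomial x \<alpha>) \<in> borel_measurable borel"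
  unfolding monomial_def by measurable

lemma kernel_powr_bound_of_min_bound:
  fixes K :: "'a::metric_space \<Rightarrow> 'a \<Rightarrow> 'b::real_normed_vector"
  assumes "\<exists>C. \<forall>x y. x \<noteq> y \<longrightarrow> norm (K x y) \<le> C * min (dist x y powr a) (dist x y powr b)"
  obtains C where "C \<ge> 0" "\<And>x y. y \<noteq> x \<Longrightarrow> norm (K x y) \<le> C * dist x y powr b"
proof -
  obtain C0 where C0: "\<forall>x y. x \<noteq> y \<longrightarrow> norm (K x y) \<le> C0 * min (dist x y powr a) (dist x y powr b)"
    using assms by blast
  show ?thesis
  proof (rule that[of "max C0 0"])
    fix x y :: 'a
    assume "y \<noteq> x"
    define m where "m = min (dist x y powr a) (dist x y powr b)"
    have "norm (K x y) \<le> C0 * m"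
      using C0[rule_format, OF not_sym[OF \<open>y \<noteq> x\<close>]] by (simp only: m_def)
    also have "\<dots> \<le> max C0 0 * m"
      unfolding m_def by (intro mult_right_mono) simp_all
    also have "\<dots> \<le> max C0 0 * dist x y powr b"
      unfolding m_def by (intro mult_left_mono) simp_all
    finally show "norm (K x y) \<le> max C0 0 * dist x y powr b" .
  qed simp
qed

lemma nonzero_mem_supp: "g y \<noteq> 0 \<Longrightarrow> y \<in> supp g"
  using closure_subset[of "{x. g x \<noteq> 0}"] unfolding supp_def by blast

lemma integrable_if_L2_bounded_supp:
  assumes g: "g \<in> L2" and R: "\<forall>y\<in>supp g. norm y \<le> R"
  shows "integrable lebesgue g"
proof (rule integrable_if_square_integrable_vanishing_outside)
  show "g \<in> borel_measurable lebesgue" "integrable lebesgue (\<lambda>x. norm (g x) ^ 2)"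
    using g by (simp_all add: L2_def)
  show "cball 0 R \<in> sets lebesgue" "emeasure lebesgue (cball 0 R) < \<infinity>"
    using lmeasurable_cball[of 0 R] by (simp_all add: fmeasurable_def)
  show "g x = 0" if "x \<notin> cball 0 R" for x
    using that R nonzero_mem_supp[of g x] by auto
qed

lemma AE_decay_of_kernel_representation:
  fixes g :: "real^'n \<Rightarrow> complex"
  assumes repr: "AE x in lebesgue. x \<notin> supp g \<longrightarrow> f x = (LINT y|lebesgue. K x y * g y)"
    and K: "\<And>x y. y \<noteq> x \<Longrightarrow> norm (K x y) \<le> C * dist x y powr (- p)"
    and C: "C \<ge> 0" and p: "p \<ge> 0" and g: "integrable lebesgue g"
    and R: "R > 0" and supp: "\<forall>y\<in>supp g. norm y \<le> R"
  shows "AE x in lebesgue. 2 * R \<le> norm x \<longrightarrow>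
    norm (f x) \<le> C * 2 powr p * (LINT y|lebesgue. norm (g y)) * norm x powr (- p)"
  using repr
proof (rule AE_mp[OF _ AE_I2], intro impI)
  fix x :: "real^'n"
  assume repr_x: "x \<notin> supp g \<longrightarrow> f x = (LINT y|lebesgue. K x y * g y)" and x: "2 * R \<le> norm x"
  have g_supp: "norm y \<le> R" if "g y \<noteq> 0" for y
    using supp nonzero_mem_supp[of g y, OF that] by blast
  have "x \<notin> supp g"
  proof
    assume "x \<in> supp g"
    then have "norm x \<le> R" using supp by blast
    then show False using R x by linarith
  qed
  moreover have "norm (LINT y|lebesgue. K x y * g y)
      \<le> C * 2 powr p * (LINT y|lebesgue. norm (g y)) * norm x powr (- p)"
    using K C p g g_supp R x by (intro norm_integral_kernel_far_le[where K = K and x = x])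
  ultimately show "norm (f x) \<le> C * 2 powr p * (LINT y|lebesgue. norm (g y)) * norm x powr (- p)"
    using repr_x by simp
qed

lemma integrable_monomial_mult:
  fixes f :: "real^'n \<Rightarrow> complex"
  assumes f: "f \<in> borel_measurable lebesgue"
    and int: "integrable lebesgue (\<lambda>x. norm x ^ mi_order \<alpha> * norm (f x))"
  shows "integrable lebesgue (\<lambda>x. complex_of_real (monomial x \<alpha>) * f x)"
  using int
proof (rule Bochner_Integration.integrable_bound)
  show "(\<lambda>x. complex_of_real (monomial x \<alpha>) * f x) \<in> borel_measurable lebesgue"
    using borel_measurable_lebesgueI[OF borel_measurable_monomial] f
    by (intro borel_measurable_times measurable_compose[OF _ borel_measurable_of_real])
  show "AE x in lebesgue. norm (complex_of_real (monomial x \<alpha>) * f x)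
      \<le> norm (norm x ^ mi_order \<alpha> * norm (f x))"
    by (intro AE_I2) (simp add: norm_mult mult_right_mono abs_monomial_le)
qed

theorem proposition5p2:
  fixes T :: "(real^'n \<Rightarrow> complex) \<Rightarrow> (real^'n \<Rightarrow> complex)"
    and K :: "real^'n \<Rightarrow> real^'n \<Rightarrow> complex"
    and \<mu> \<delta> :: real
  assumes lin_add: "\<And>f g. f \<in> L2 \<Longrightarrow> g \<in> L2 \<Longrightarrow>
             AE x in lebesgue. T (\<lambda>y. f y + g y) x = T f x + T g x"
    and lin_scale: "\<And>f c. f \<in> L2 \<Longrightarrow> AE x in lebesgue. T (\<lambda>y. c * f y) x = c * T f x"
    and bounded: "\<exists>C. \<forall>f\<in>L2. T f \<in> L2 \<and> L2_norm_sq (T f) \<le> C * L2_norm_sq f"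
    and K_loc_int: "\<And>S. compact S \<Longrightarrow> S \<subseteq> {p. fst p \<noteq> snd p} \<Longrightarrow>
             set_integrable lebesgue S (\<lambda>p. K (fst p) (snd p))"
    and K_repr: "\<And>g. g \<in> L2 \<Longrightarrow> compact (supp g) \<Longrightarrow>
             AE x in lebesgue. x \<notin> supp g \<longrightarrow> T g x = (LINT y|lebesgue. K x y * g y)"
    and mu_pos: "\<mu> > 0"
    and size: "\<exists>C. \<forall>x y. x \<noteq> y \<longrightarrow>
             norm (K x y) \<le> C * min (dist x y powr (- real CARD('n)))
                                     (dist x y powr (- real CARD('n) - \<mu>))"
    and delta_pos: "\<delta> > 0"
    and smooth: "\<exists>C. \<forall>r j z y. 0 < r \<longrightarrow> r < 1 \<longrightarrow> j \<ge> 1 \<longrightarrow> dist y z < r \<longrightarrow>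
             (\<integral>\<^sup>+ x \<in> annulus j z r. ennreal (norm (K x y - K x z) + norm (K y x - K z x)) \<partial>lebesgue)
               \<le> ennreal (C * 2 powr (- real j * \<delta>))"
  shows "\<forall>g \<alpha>. g \<in> L2 \<and> compact (supp g) \<and> (LINT y|lebesgue. g y) = 0
             \<and> real (mi_order \<alpha>) < min \<mu> \<delta>
           \<longrightarrow> integrable lebesgue (\<lambda>x. complex_of_real (monomial x \<alpha>) * T g x)"
proof (intro allI impI, elim conjE)
  fix g :: "real^'n \<Rightarrow> complex" and \<alpha> :: "'n \<Rightarrow> nat"
  assume gL2: "g \<in> L2" and g_supp: "compact (supp g)"
    and order_less: "real (mi_order \<alpha>) < min \<mu> \<delta>"
  define p where "p = real CARD('n) + \<mu>"
  obtain C where C: "C \<ge> 0" "\<And>x y. y \<noteq> x \<Longrightarrow> norm (K x y) \<le> C * dist x y powr (- real CARD('n) - \<mu>)"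
    using kernel_powr_bound_of_min_bound[OF size] by blast
  have "p \<ge> 0"
    using mu_pos by (simp add: p_def)
  have K_decay: "norm (K x y) \<le> C * dist x y powr (- p)" if "y \<noteq> x" for x y
    using C(2)[OF that] by (simp add: p_def)
  obtain R where R: "R > 0" "\<forall>y\<in>supp g. norm y \<le> R"
    using compact_imp_bounded[OF g_supp] bounded_pos by blast
  have "T g \<in> L2"
    using bounded gL2 by blast
  then have Tg: "T g \<in> borel_measurable lebesgue" "integrable lebesgue (\<lambda>x. norm (T g x) ^ 2)"
    by (simp_all add: L2_def)
  have decay: "AE x in lebesgue. 2 * R \<le> norm x \<longrightarrow>
      norm (T g x) \<le> C * 2 powr p * (LINT y|lebesgue. norm (g y)) * norm x powr (- p)"
    using AE_decay_of_kernel_representation[OF K_repr[OF gL2 g_supp] K_decay C(1) \<open>p \<ge> 0\<close>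
        integrable_if_L2_bounded_supp[OF gL2 R(2)] R] .
  have "integrable lebesgue (\<lambda>x. norm x ^ mi_order \<alpha> * norm (T g x))"
    by (rule integrable_norm_power_mult_if_decay[OF Tg _ decay])
      (use R(1) order_less in \<open>auto simp: p_def\<close>)
  then show "integrable lebesgue (\<lambda>x. complex_of_real (monomial x \<alpha>) * T g x)"
    by (rule integrable_monomial_mult[OF Tg(1)])
qed

end
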